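(* Let $F$ be a violating edge set and let $(\mathcal{T},\mathcal{M},y)$ be a tree embedding of $(G,\tilde x)$ that is good for $F$. Then $|Z_F|\le 2^{2(p+q)\beta}k$.
   Context: Setting: $G=(V,E)$ is an undirected graph with edges partitioned into safe and unsafe edges; $p,q$ are nonnegative integers with $p+q\ge1$; $(s_i,t_i)$, $i\in[k]$, are terminal pairs; $H\subseteq E$ is such that every pair is $(p,q)$-flex-connected in $H$ (every cut $\delta_H(S)$ separating $s_i$ from $t_i$ has at least $p$ safe edges or at least $p+q$ edges). A violating edge set is $F=\delta_H(S)$ for some $S$ separating some pair with $|\delta_H(S)|=p+q$ and at most $p-1$ safe edges. Let $\beta\ge1$ and let $\tilde x:E\to\mathbb{R}_{>0}$ be capacities with $\tilde x_e=\frac{1}{4(p+q)\beta}$ for every $e\in H$. A tree embedding of $(G,\tilde x)$ is a tree $\mathcal{T}$ with $\mathcal{M}_1:V(\mathcal{T})\to V$ restricting to a bijection between leaves and $V$ (vertices identified with leaves), and $\mathcal{M}_2$ mapping each tree edge $(a,b)$ to a path in $G$ between $\mathcal{M}_1(a),\mathcal{M}_1(b)$; capacities $y(f)=\tilde x(\delta_G(A'))$ with $A'$ the vertex set of leaves in one component of $\mathcal{T}-f$; $\mathcal{M}^{-1}(F)=\{f:\mathcal{M}_2(f)\cap F\neq\emptyset\}$; good for $F$ means $y(\mathcal{M}^{-1}(F))\le\frac12$. $\mathcal{Q}_F$ is the set of components of $(V,H\setminus F)$; $Q_{s_i},Q_{t_i}$ contain $s_i,t_i$; $Q\in\mathcal{Q}_F$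 is shattered if its leaves are not all in one component of $\mathcal{T}-\mathcal{M}^{-1}(F)$; disjoint $A,B\subseteq V$ partition the shattered components if each shattered component lies in $A$ or in $B$; $Z_F=\{(A\cup Q_{s_i},B\cup Q_{t_i}):(A,B)\text{ partitions the shattered components},i\in[k]\}$. *)

theory Defs
  imports Complex_Main
begin

definition cut :: "('e \<Rightarrow> 'v \<times> 'v) \<Rightarrow> 'e set \<Rightarrow> 'v set \<Rightarrow> 'e set" where
  "cut ep X S = {e \<in> X. (fst (ep e) \<in> S) \<noteq> (snd (ep e) \<in> S)}"

definition separates :: "'v set \<Rightarrow> 'v \<Rightarrow> 'v \<Rightarrow> bool" where
  "separates S a b \<longleftrightarrow> (a \<in> S \<and> b \<notin> S) \<or> (b \<in> S \<and> a \<notin> S)"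

definition flex_connected :: "'v set \<Rightarrow> ('e \<Rightarrow> 'v \<times> 'v) \<Rightarrow> 'e set \<Rightarrow> 'e set
    \<Rightarrow> nat \<Rightarrow> nat \<Rightarrow> nat \<Rightarrow> (nat \<Rightarrow> 'v) \<Rightarrow> (nat \<Rightarrow> 'v) \<Rightarrow> bool" where
  "flex_connected V ep safe H p q k s t \<longleftrightarrow>
     (\<forall>i\<in>{1..k}. \<forall>S\<subseteq>V. separates S (s i) (t i) \<longrightarrow>
        card (cut ep H S \<inter> safe) \<ge> p \<or> card (cut ep H S) \<ge> p + q)"

definition violating :: "'v set \<Rightarrow> ('e \<Rightarrow> 'v \<times> 'v) \<Rightarrow> 'e set \<Rightarrow> 'e set
    \<Rightarrow> nat \<Rightarrow> nat \<Rightarrow> nat \<Rightarrow> (nat \<Rightarrow> 'v) \<Rightarrow> (nat \<Rightarrow> 'v) \<Rightarrow> 'e set \<Rightarrow> bool" where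
  "violating V ep safe H p q k s t F \<longleftrightarrow>
     (\<exists>S\<subseteq>V. \<exists>i\<in>{1..k}. separates S (s i) (t i) \<and> F = cut ep H S \<and>
        card (cut ep H S) = p + q \<and> card (cut ep H S \<inter> safe) < p)"

definition greach :: "'v set \<Rightarrow> ('e \<Rightarrow> 'v \<times> 'v) \<Rightarrow> 'e set \<Rightarrow> 'v \<Rightarrow> 'v \<Rightarrow> bool" where
  "greach V ep X = (\<lambda>u w. u \<in> V \<and> w \<in> V \<and> (\<exists>e\<in>X. ep e = (u, w) \<or> ep e = (w, u)))\<^sup>*\<^sup>*"

definition gcomp :: "'v set \<Rightarrow> ('e \<Rightarrow> 'v \<times> 'v) \<Rightarrow> 'e set \<Rightarrow> 'v \<Rightarrow> 'v set" where
  "gcomp V ep X v = {w \<in> V. greach V ep X v w}"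

definition gcomps :: "'v set \<Rightarrow> ('e \<Rightarrow> 'v \<times> 'v) \<Rightarrow> 'e set \<Rightarrow> 'v set set" where
  "gcomps V ep X = gcomp V ep X ` V"

definition gpath :: "'v set \<Rightarrow> 'e set \<Rightarrow> ('e \<Rightarrow> 'v \<times> 'v) \<Rightarrow> 'v \<Rightarrow> 'e list \<Rightarrow> 'v \<Rightarrow> bool" where
  "gpath V E ep u es w \<longleftrightarrow>
     (\<exists>vs. length vs = Suc (length es) \<and> hd vs = u \<and> last vs = w \<and> distinct vs \<and> set vs \<subseteq> V \<and>
        (\<forall>j < length es. es ! j \<in> E \<and>
           (ep (es ! j) = (vs ! j, vs ! Suc j) \<or> ep (es ! j) = (vs ! Suc j, vs ! j))))"

definition tadj :: "'t set \<Rightarrow> 't set set \<Rightarrow> 't \<Rightarrow> 't \<Rightarrow> bool" where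
  "tadj VT D a b \<longleftrightarrow> a \<in> VT \<and> b \<in> VT \<and> a \<noteq> b \<and> {a, b} \<in> D"

definition is_cycle :: "'t set \<Rightarrow> 't set set \<Rightarrow> 't list \<Rightarrow> bool" where
  "is_cycle VT ET cs \<longleftrightarrow> length cs \<ge> 3 \<and> distinct cs \<and>
     (\<forall>j. Suc j < length cs \<longrightarrow> tadj VT ET (cs ! j) (cs ! Suc j)) \<and>
     tadj VT ET (last cs) (hd cs)"

definition is_tree :: "'t set \<Rightarrow> 't set set \<Rightarrow> bool" where
  "is_tree VT ET \<longleftrightarrow> finite VT \<and> VT \<noteq> {} \<and>
     (\<forall>f\<in>ET. \<exists>a b. f = {a, b} \<and> a \<noteq> b \<and> a \<in> VT \<and> b \<in> VT) \<and>
     (\<forall>a\<in>VT. \<forall>b\<in>VT. (tadj VT ET)\<^sup>*\<^sup>* a b) \<and>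
     (\<nexists>cs. is_cycle VT ET cs)"

(* leaves: vertices of degree at most one (degree 0 only for the one-vertex tree) *)
definition tleaves :: "'t set \<Rightarrow> 't set set \<Rightarrow> 't set" where
  "tleaves VT ET = {a \<in> VT. card {f \<in> ET. a \<in> f} \<le> 1}"

definition tcomp :: "'t set \<Rightarrow> 't set set \<Rightarrow> 't \<Rightarrow> 't set" where
  "tcomp VT D a = {b \<in> VT. (tadj VT D)\<^sup>*\<^sup>* a b}"

definition tree_embedding :: "'v set \<Rightarrow> 'e set \<Rightarrow> ('e \<Rightarrow> 'v \<times> 'v)
    \<Rightarrow> 't set \<Rightarrow> 't set set \<Rightarrow> ('t \<Rightarrow> 'v) \<Rightarrow> ('t set \<Rightarrow> 'e list) \<Rightarrow> bool" where
  "tree_embedding V E ep VT ET M1 M2 \<longleftrightarrow>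
     is_tree VT ET \<and> M1 ` VT \<subseteq> V \<and> bij_betw M1 (tleaves VT ET) V \<and>
     (\<forall>f\<in>ET. \<exists>a b. f = {a, b} \<and> gpath V E ep (M1 a) (M2 f) (M1 b))"

(* y(f) = x(delta_G(A')), A' = leaves of one component of T - f (identified with vertices of G) *)
definition tcap :: "'e set \<Rightarrow> ('e \<Rightarrow> 'v \<times> 'v) \<Rightarrow> ('e \<Rightarrow> real)
    \<Rightarrow> 't set \<Rightarrow> 't set set \<Rightarrow> ('t \<Rightarrow> 'v) \<Rightarrow> 't set \<Rightarrow> real" where
  "tcap E ep x VT ET M1 f =
     sum x (cut ep E (M1 ` (tleaves VT ET \<inter> tcomp VT (ET - {f}) (SOME a. a \<in> f))))"

definition Minv :: "'t set set \<Rightarrow> ('t set \<Rightarrow> 'e list) \<Rightarrow> 'e set \<Rightarrow> 't set set" where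
  "Minv ET M2 F = {f \<in> ET. set (M2 f) \<inter> F \<noteq> {}}"

definition good_for :: "'e set \<Rightarrow> ('e \<Rightarrow> 'v \<times> 'v) \<Rightarrow> ('e \<Rightarrow> real)
    \<Rightarrow> 't set \<Rightarrow> 't set set \<Rightarrow> ('t \<Rightarrow> 'v) \<Rightarrow> ('t set \<Rightarrow> 'e list) \<Rightarrow> 'e set \<Rightarrow> bool" where
  "good_for E ep x VT ET M1 M2 F \<longleftrightarrow>
     (\<Sum>f\<in>Minv ET M2 F. tcap E ep x VT ET M1 f) \<le> 1/2"

definition shattered :: "'t set \<Rightarrow> 't set set \<Rightarrow> ('t \<Rightarrow> 'v) \<Rightarrow> ('t set \<Rightarrow> 'e list)
    \<Rightarrow> 'e set \<Rightarrow> 'v set \<Rightarrow> bool" where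
  "shattered VT ET M1 M2 F Q \<longleftrightarrow>
     \<not> (\<exists>a\<in>VT. \<forall>l\<in>tleaves VT ET. M1 l \<in> Q \<longrightarrow> l \<in> tcomp VT (ET - Minv ET M2 F) a)"

definition shattered_comps :: "'v set \<Rightarrow> ('e \<Rightarrow> 'v \<times> 'v) \<Rightarrow> 'e set
    \<Rightarrow> 't set \<Rightarrow> 't set set \<Rightarrow> ('t \<Rightarrow> 'v) \<Rightarrow> ('t set \<Rightarrow> 'e list) \<Rightarrow> 'e set \<Rightarrow> 'v set set" where
  "shattered_comps V ep H VT ET M1 M2 F =
     {Q \<in> gcomps V ep (H - F). shattered VT ET M1 M2 F Q}"

definition partitions_shattered :: "'v set set \<Rightarrow> 'v set \<Rightarrow> 'v set \<Rightarrow> bool" where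
  "partitions_shattered SC A B \<longleftrightarrow>
     A \<inter> B = {} \<and> A \<union> B = \<Union>SC \<and> (\<forall>Q\<in>SC. Q \<subseteq> A \<or> Q \<subseteq> B)"

definition Z_set :: "'v set \<Rightarrow> ('e \<Rightarrow> 'v \<times> 'v) \<Rightarrow> 'e set \<Rightarrow> nat \<Rightarrow> (nat \<Rightarrow> 'v) \<Rightarrow> (nat \<Rightarrow> 'v)
    \<Rightarrow> 't set \<Rightarrow> 't set set \<Rightarrow> ('t \<Rightarrow> 'v) \<Rightarrow> ('t set \<Rightarrow> 'e list) \<Rightarrow> 'e set \<Rightarrow> ('v set \<times> 'v set) set" where
  "Z_set V ep H k s t VT ET M1 M2 F =
     {(A \<union> gcomp V ep (H - F) (s i), B \<union> gcomp V ep (H - F) (t i)) | A B i.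
        partitions_shattered (shattered_comps V ep H VT ET M1 M2 F) A B \<and> i \<in> {1..k}}"

end

theory Submission
  imports Defs "HOL-Library.Transitive_Closure_Table"
begin

text \<open>Each shattered component Q of H - F contains two leaves that lie in different components
  of T - M^{-1}(F). The tree path between them uses some f in M^{-1}(F) that separates them, so
  the leaf side A' of f splits Q, and since Q is connected in H - F an edge of H inside Q crosses
  the cut of A'. Distinct components yield distinct edges, each of capacity 1/(4(p+q)\<beta>), so
  goodness of the embedding, i.e. the sum of y(f) over M^{-1}(F) being at most 1/2, leaves room
  for at most 2(p+q)\<beta> shattered components. A partition (A, B) is determined by the
  components it puts into A, which gives at most 2^(2(p+q)\<beta>) partitions and the factor k
  counts the terminal pairs.\<close>

lemma tadj_sym: "tadj VT D a b \<Longrightarrow> tadj VT D b a"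
  by (auto simp: tadj_def insert_commute)

lemma tadj_rtranclp_sym: "(tadj VT D)\<^sup>*\<^sup>* a b \<Longrightarrow> (tadj VT D)\<^sup>*\<^sup>* b a"
  by (metis symp_rtranclp sympD sympI tadj_sym)

lemma tadj_mono: "D \<subseteq> D' \<Longrightarrow> tadj VT D a b \<Longrightarrow> tadj VT D' a b"
  by (auto simp: tadj_def)

lemma is_tree_edge_vertices:
  assumes "is_tree VT ET" "{a, b} \<in> ET"
  shows "a \<in> VT" "b \<in> VT"
  using assms unfolding is_tree_def by (metis doubleton_eq_iff)+

lemma is_tree_finite_edges: "is_tree VT ET \<Longrightarrow> finite ET"
  unfolding is_tree_def by (metis Pow_iff empty_subsetI finite_Pow_iff finite_subset insert_subset subsetI)

lemma tree_remove_edge_disconnects: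
  assumes tree: "is_tree VT ET" and ab: "{a, b} \<in> ET" "a \<noteq> b"
  shows "\<not> (tadj VT (ET - {{a, b}}))\<^sup>*\<^sup>* a b"
proof
  let ?R = "tadj VT (ET - {{a, b}})"
  assume "?R\<^sup>*\<^sup>* a b"
  then obtain ys where path: "rtrancl_path ?R a ys b" and distinct: "distinct (a # ys)"
    by (metis rtranclp_eq_rtrancl_path rtrancl_path_distinct)
  have "ys \<noteq> []" using path ab(2) by (auto elim: rtrancl_path.cases)
  then have last: "last ys = b" using path by (simp add: rtrancl_path_last)
  have "ys \<noteq> [b]"
    using rtrancl_path_nth[OF path, of 0] by (auto simp: tadj_def)
  with \<open>ys \<noteq> []\<close> last have "length ys \<ge> 2"
    by (cases ys) (auto simp: Suc_le_eq)
  have "is_cycle VT ET (a # ys)"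
    unfolding is_cycle_def
  proof (intro conjI allI impI)
    show "3 \<le> length (a # ys)" using \<open>length ys \<ge> 2\<close> by simp
    show "distinct (a # ys)" by (rule distinct)
    fix j assume "Suc j < length (a # ys)"
    then show "tadj VT ET ((a # ys) ! j) ((a # ys) ! Suc j)"
      using rtrancl_path_nth[OF path, of j] tadj_mono[of "ET - {{a, b}}" ET] by auto
  next
    show "tadj VT ET (last (a # ys)) (hd (a # ys))"
      using last \<open>ys \<noteq> []\<close> ab is_tree_edge_vertices[OF tree ab(1)]
      by (auto simp: tadj_def insert_commute)
  qed
  then show False using tree unfolding is_tree_def by blast
qed

lemma rtrancl_path_avoids_edge:
  "rtrancl_path (tadj VT ET) y ys w \<Longrightarrow> u \<notin> set (y # ys) \<Longrightarrow> u \<in> f \<Longrightarrow>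
   (tadj VT (ET - {f}))\<^sup>*\<^sup>* y w"
proof (induction rule: rtrancl_path.induct)
  case (step x y ys z)
  then have "tadj VT (ET - {f}) x y" by (auto simp: tadj_def)
  with step show ?case by (auto intro: converse_rtranclp_into_rtranclp)
qed simp

text \<open>The edge found is the first edge of the path that lies in D; distinctness of the path
  guarantees that its remainder does not use that edge again.\<close>
lemma distinct_path_crosses_removed_edge:
  "rtrancl_path (tadj VT ET) u xs w \<Longrightarrow> distinct (u # xs) \<Longrightarrow> D \<subseteq> ET \<Longrightarrow>
   \<not> (tadj VT (ET - D))\<^sup>*\<^sup>* u w \<Longrightarrow>
   \<exists>f\<in>D. \<exists>a b. f = {a, b} \<and> a \<noteq> b \<and>
     (tadj VT (ET - {f}))\<^sup>*\<^sup>* u a \<and> (tadj VT (ET - {f}))\<^sup>*\<^sup>* w b"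
proof (induction rule: rtrancl_path.induct)
  case (step x y ys z)
  show ?case
  proof (cases "{x, y} \<in> D")
    case True
    have "(tadj VT (ET - {{x, y}}))\<^sup>*\<^sup>* y z"
      using rtrancl_path_avoids_edge[OF step(2), of x "{x, y}"] step(4) by auto
    moreover have "x \<noteq> y" using step(1) by (auto simp: tadj_def)
    ultimately show ?thesis using True by (blast intro: tadj_rtranclp_sym)
  next
    case False
    have xy: "tadj VT (ET - D) x y" using step(1) False by (auto simp: tadj_def)
    then have "\<not> (tadj VT (ET - D))\<^sup>*\<^sup>* y z"
      using step(6) by (meson converse_rtranclp_into_rtranclp)
    then obtain f a b where f: "f \<in> D" "f = {a, b}" "a \<noteq> b"
      "(tadj VT (ET - {f}))\<^sup>*\<^sup>* y a" "(tadj VT (ET - {f}))\<^sup>*\<^sup>* z b"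
      using step by auto
    have "tadj VT (ET - {f}) x y" using step(1) False f(1) by (auto simp: tadj_def)
    then have "(tadj VT (ET - {f}))\<^sup>*\<^sup>* x a" using f(4) by (auto intro: converse_rtranclp_into_rtranclp)
    then show ?thesis using f by blast
  qed
qed simp

lemma tree_separating_edge:
  assumes tree: "is_tree VT ET" and D: "D \<subseteq> ET" and u: "u \<in> VT" and w: "w \<in> VT"
    and sep: "w \<notin> tcomp VT (ET - D) u"
  obtains f where "f \<in> D"
    "\<And>c. c \<in> f \<Longrightarrow> (u \<in> tcomp VT (ET - {f}) c) \<noteq> (w \<in> tcomp VT (ET - {f}) c)"
proof -
  have "(tadj VT ET)\<^sup>*\<^sup>* u w" using tree u w by (simp add: is_tree_def)
  then obtain xs where "rtrancl_path (tadj VT ET) u xs w" "distinct (u # xs)"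
    by (metis rtranclp_eq_rtrancl_path rtrancl_path_distinct)
  moreover have "\<not> (tadj VT (ET - D))\<^sup>*\<^sup>* u w" using w sep by (simp add: tcomp_def)
  ultimately obtain f a b where f: "f \<in> D" "f = {a, b}" "a \<noteq> b"
    and ua: "(tadj VT (ET - {f}))\<^sup>*\<^sup>* u a" and wb: "(tadj VT (ET - {f}))\<^sup>*\<^sup>* w b"
    using distinct_path_crosses_removed_edge D by metis
  have ab: "\<not> (tadj VT (ET - {f}))\<^sup>*\<^sup>* a b"
    using tree_remove_edge_disconnects[OF tree] f D by blast
  show thesis
  proof (rule that[OF f(1)])
    fix c assume "c \<in> f"
    then consider "c = a" | "c = b" using f(2) by blast
    then show "(u \<in> tcomp VT (ET - {f}) c) \<noteq> (w \<in> tcomp VT (ET - {f}) c)"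
    proof cases
      case 1
      have "\<not> (tadj VT (ET - {f}))\<^sup>*\<^sup>* a w" using ab wb by (metis rtranclp_trans)
      then show ?thesis using 1 ua u by (simp add: tcomp_def tadj_rtranclp_sym)
    next
      case 2
      have "\<not> (tadj VT (ET - {f}))\<^sup>*\<^sup>* b u" using ab ua by (metis rtranclp_trans tadj_rtranclp_sym)
      then show ?thesis using 2 wb w by (simp add: tcomp_def tadj_rtranclp_sym)
    qed
  qed
qed

lemma greach_sym: "greach V ep X u w \<Longrightarrow> greach V ep X w u"
  unfolding greach_def
  by (induction rule: rtranclp_induct) (auto intro: converse_rtranclp_into_rtranclp)

lemma greach_trans: "greach V ep X u w \<Longrightarrow> greach V ep X w z \<Longrightarrow> greach V ep X u z"
  unfolding greach_def by (rule rtranclp_trans)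

lemma gcomp_eq_if_common:
  "z \<in> gcomp V ep X u \<Longrightarrow> z \<in> gcomp V ep X w \<Longrightarrow> gcomp V ep X u = gcomp V ep X w"
  unfolding gcomp_def by (blast intro: greach_sym greach_trans)

lemma gcomp_crossing_edge:
  assumes "w \<in> gcomp V ep X u" and "(u \<in> S) \<noteq> (w \<in> S)"
  obtains e where "e \<in> cut ep X S" "fst (ep e) \<in> gcomp V ep X u" "snd (ep e) \<in> gcomp V ep X u"
proof -
  have "greach V ep X u w" using assms(1) by (simp add: gcomp_def)
  then have "\<exists>e\<in>cut ep X S. fst (ep e) \<in> gcomp V ep X u \<and> snd (ep e) \<in> gcomp V ep X u"
    using assms(2) unfolding greach_def
  proof (induction rule: rtranclp_induct)
    case (step y z)
    show ?case
    proof (cases "(u \<in> S) = (y \<in> S)")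
      case True
      from step(2) obtain e where e: "e \<in> X" "ep e = (y, z) \<or> ep e = (z, y)" by auto
      have "greach V ep X u y" "greach V ep X u z"
        using step(1) rtranclp.rtrancl_into_rtrancl[OF step(1,2)] by (simp_all add: greach_def)
      moreover have "y \<in> V" "z \<in> V" using step(2) by auto
      ultimately show ?thesis using e True step(4) unfolding cut_def gcomp_def by force
    next
      case False
      then show ?thesis using step.IH by blast
    qed
  qed simp
  then show thesis using that by blast
qed

text \<open>The set A' of the paper: the leaves on the side of f that contains the endpoint of f
  chosen by SOME in the definition of tcap.\<close>
definition tree_side :: "'t set \<Rightarrow> 't set set \<Rightarrow> ('t \<Rightarrow> 'v) \<Rightarrow> 't set \<Rightarrow> 'v set" where
  "tree_side VT ET M1 f = M1 ` (tleaves VT ET \<inter> tcomp VT (ET - {f}) (SOME a. a \<in> f))"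

lemma tcap_tree_side: "tcap E ep x VT ET M1 f = sum x (cut ep E (tree_side VT ET M1 f))"
  by (simp add: tcap_def tree_side_def)

lemma shattered_comp_crossing_edge:
  assumes emb: "tree_embedding V E ep VT ET M1 M2"
    and Q: "Q \<in> shattered_comps V ep H VT ET M1 M2 F"
  obtains f e where "f \<in> Minv ET M2 F" "e \<in> cut ep H (tree_side VT ET M1 f)"
    "fst (ep e) \<in> Q" "snd (ep e) \<in> Q"
proof -
  have tree: "is_tree VT ET" and bij: "bij_betw M1 (tleaves VT ET) V"
    using emb by (auto simp: tree_embedding_def)
  have leaves: "tleaves VT ET \<subseteq> VT" by (auto simp: tleaves_def)
  from Q obtain v where "v \<in> V" and Qv: "Q = gcomp V ep (H - F) v"
    and sh: "shattered VT ET M1 M2 F Q"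
    by (auto simp: shattered_comps_def gcomps_def)
  have "v \<in> M1 ` tleaves VT ET" using bij \<open>v \<in> V\<close> by (simp add: bij_betw_def)
  then obtain l1 where l1: "l1 \<in> tleaves VT ET" "M1 l1 = v" by blast
  then obtain l2 where l2: "l2 \<in> tleaves VT ET" "M1 l2 \<in> Q"
    "l2 \<notin> tcomp VT (ET - Minv ET M2 F) l1"
    using sh leaves unfolding shattered_def by blast
  obtain f where f: "f \<in> Minv ET M2 F"
    and sep: "\<And>c. c \<in> f \<Longrightarrow> (l1 \<in> tcomp VT (ET - {f}) c) \<noteq> (l2 \<in> tcomp VT (ET - {f}) c)"
    using tree_separating_edge[OF tree _ _ _ l2(3)] l1(1) l2(1) leaves
    by (auto simp: Minv_def)
  let ?c = "SOME a. a \<in> f"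
  have "f \<noteq> {}" using f tree by (auto simp: Minv_def is_tree_def)
  then have "(l1 \<in> tcomp VT (ET - {f}) ?c) \<noteq> (l2 \<in> tcomp VT (ET - {f}) ?c)"
    by (intro sep) (simp add: some_in_eq)
  moreover have side: "(M1 l \<in> tree_side VT ET M1 f) = (l \<in> tcomp VT (ET - {f}) ?c)"
    if "l \<in> tleaves VT ET" for l
    using that inj_on_image_mem_iff[of M1 "tleaves VT ET"] bij
    unfolding tree_side_def bij_betw_def by blast
  ultimately have crosses: "(v \<in> tree_side VT ET M1 f) \<noteq> (M1 l2 \<in> tree_side VT ET M1 f)"
    using side[OF l1(1)] side[OF l2(1)] l1(2) by simp
  have "M1 l2 \<in> gcomp V ep (H - F) v" using l2(2) Qv by simp
  then obtain e where "e \<in> cut ep (H - F) (tree_side VT ET M1 f)"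
    "fst (ep e) \<in> gcomp V ep (H - F) v" "snd (ep e) \<in> gcomp V ep (H - F) v"
    using crosses by (rule gcomp_crossing_edge)
  then show thesis using that[OF f] Qv by (auto simp: cut_def)
qed

lemma sum_injective_choice_le:
  fixes w :: "'c \<Rightarrow> real"
  assumes "finite I" "finite J" "inj_on e I"
    and "\<And>i. i \<in> I \<Longrightarrow> j i \<in> J \<and> e i \<in> C (j i)"
    and "\<And>a. a \<in> J \<Longrightarrow> finite (C a)" "\<And>a c. a \<in> J \<Longrightarrow> c \<in> C a \<Longrightarrow> 0 \<le> w c"
  shows "(\<Sum>i\<in>I. w (e i)) \<le> (\<Sum>a\<in>J. sum w (C a))"
proof -
  have "(\<Sum>i\<in>I. w (e i)) = (\<Sum>a\<in>J. \<Sum>i\<in>{i \<in> I. j i = a}. w (e i))"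
    using assms(1,2,4) by (intro sum.group[symmetric]) auto
  also have "\<dots> = (\<Sum>a\<in>J. sum w (e ` {i \<in> I. j i = a}))"
    using assms(3) by (intro sum.cong refl sum.reindex[symmetric, unfolded comp_def])
      (auto intro: inj_on_subset)
  also have "\<dots> \<le> (\<Sum>a\<in>J. sum w (C a))"
    using assms(4-6) by (intro sum_mono sum_mono2) auto
  finally show ?thesis .
qed

lemma finite_shattered_comps: "finite V \<Longrightarrow> finite (shattered_comps V ep H VT ET M1 M2 F)"
  unfolding shattered_comps_def gcomps_def by simp

lemma card_shattered_comps_weighted_le:
  assumes emb: "tree_embedding V E ep VT ET M1 M2"
    and "finite V" "finite E" "H \<subseteq> E"
    and nonneg: "\<forall>e\<in>E. 0 \<le> x e" and const: "\<forall>e\<in>H. x e = c"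
  shows "real (card (shattered_comps V ep H VT ET M1 M2 F)) * c
    \<le> (\<Sum>f\<in>Minv ET M2 F. tcap E ep x VT ET M1 f)"
proof -
  let ?SC = "shattered_comps V ep H VT ET M1 M2 F"
  let ?P = "\<lambda>Q fe. fst fe \<in> Minv ET M2 F \<and> snd fe \<in> cut ep H (tree_side VT ET M1 (fst fe))
      \<and> fst (ep (snd fe)) \<in> Q \<and> snd (ep (snd fe)) \<in> Q"
  have "\<forall>Q\<in>?SC. \<exists>fe. ?P Q fe"
  proof
    fix Q assume "Q \<in> ?SC"
    then obtain f e where "f \<in> Minv ET M2 F" "e \<in> cut ep H (tree_side VT ET M1 f)"
      "fst (ep e) \<in> Q" "snd (ep e) \<in> Q"
      by (rule shattered_comp_crossing_edge[OF emb])
    then show "\<exists>fe. ?P Q fe" by (intro exI[of _ "(f, e)"]) simp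
  qed
  from bchoice[OF this] obtain g where g: "\<forall>Q\<in>?SC. ?P Q (g Q)" ..
  have "inj_on (\<lambda>Q. snd (g Q)) ?SC"
  proof (rule inj_onI)
    fix Q Q' assume "Q \<in> ?SC" "Q' \<in> ?SC" and eq: "snd (g Q) = snd (g Q')"
    then obtain u u' where Q: "Q = gcomp V ep (H - F) u" and Q': "Q' = gcomp V ep (H - F) u'"
      by (auto simp: shattered_comps_def gcomps_def)
    have "fst (ep (snd (g Q))) \<in> Q" "fst (ep (snd (g Q))) \<in> Q'"
      using g \<open>Q \<in> ?SC\<close> \<open>Q' \<in> ?SC\<close> eq by auto
    then show "Q = Q'" unfolding Q Q' by (rule gcomp_eq_if_common)
  qed
  moreover have "finite ET" using emb is_tree_finite_edges by (auto simp: tree_embedding_def)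
  then have "finite (Minv ET M2 F)" by (rule rev_finite_subset) (auto simp: Minv_def)
  moreover have "\<forall>Q\<in>?SC. fst (g Q) \<in> Minv ET M2 F
      \<and> snd (g Q) \<in> cut ep E (tree_side VT ET M1 (fst (g Q)))"
    using g \<open>H \<subseteq> E\<close> by (auto simp: cut_def)
  moreover have "finite (cut ep E S)" for S using \<open>finite E\<close> by (simp add: cut_def)
  ultimately have "(\<Sum>Q\<in>?SC. x (snd (g Q))) \<le> (\<Sum>f\<in>Minv ET M2 F. tcap E ep x VT ET M1 f)"
    unfolding tcap_tree_side using finite_shattered_comps[OF \<open>finite V\<close>] nonneg
    by (intro sum_injective_choice_le[where j = "\<lambda>Q. fst (g Q)"]) (auto simp: cut_def)
  moreover have "(\<Sum>Q\<in>?SC. x (snd (g Q))) = real (card ?SC) * c"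
    using g const by (simp add: cut_def)
  ultimately show ?thesis by simp
qed

lemma partitions_shattered_determined:
  assumes "partitions_shattered SC A B"
  shows "A = \<Union>{Q \<in> SC. Q \<subseteq> A}" and "B = \<Union>SC - A"
  using assms unfolding partitions_shattered_def by blast+

lemma partitions_shattered_finite_card:
  assumes "finite SC"
  shows "finite {(A, B). partitions_shattered SC A B}"
    and "card {(A, B). partitions_shattered SC A B} \<le> 2 ^ card SC"
proof -
  let ?P = "{(A, B). partitions_shattered SC A B}"
  let ?blocks = "\<lambda>(A, B). {Q \<in> SC. Q \<subseteq> A}"
  have "inj_on ?blocks ?P"
    by (rule inj_onI) (clarsimp, metis partitions_shattered_determined)
  moreover have "?blocks ` ?P \<subseteq> Pow SC" by auto
  moreover have "finite (Pow SC)" using assms by simp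
  ultimately have "finite ?P" and "card ?P \<le> card (Pow SC)"
    by (rule inj_on_finite, rule card_inj_on_le)
  then show "finite ?P" and "card ?P \<le> 2 ^ card SC"
    using assms by (simp_all add: card_Pow)
qed

lemma card_Z_set_le:
  assumes "finite V"
  shows "card (Z_set V ep H k s t VT ET M1 M2 F)
    \<le> 2 ^ card (shattered_comps V ep H VT ET M1 M2 F) * k"
proof -
  let ?SC = "shattered_comps V ep H VT ET M1 M2 F"
  let ?P = "{(A, B). partitions_shattered ?SC A B}"
  let ?pair = "\<lambda>((A, B), i). (A \<union> gcomp V ep (H - F) (s i), B \<union> gcomp V ep (H - F) (t i))"
  have "finite ?SC" using assms by (rule finite_shattered_comps)
  then have fin: "finite ?P" and card: "card ?P \<le> 2 ^ card ?SC"
    by (rule partitions_shattered_finite_card)+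
  have "Z_set V ep H k s t VT ET M1 M2 F \<subseteq> ?pair ` (?P \<times> {1..k})"
  proof
    fix z assume "z \<in> Z_set V ep H k s t VT ET M1 M2 F"
    then obtain A B i where z: "z = (A \<union> gcomp V ep (H - F) (s i), B \<union> gcomp V ep (H - F) (t i))"
      and "partitions_shattered ?SC A B" "i \<in> {1..k}"
      unfolding Z_set_def by blast
    then show "z \<in> ?pair ` (?P \<times> {1..k})" by (intro image_eqI[of _ _ "((A, B), i)"]) simp_all
  qed
  then have "card (Z_set V ep H k s t VT ET M1 M2 F) \<le> card (?pair ` (?P \<times> {1..k}))"
    by (rule card_mono[rotated]) (simp add: fin)
  also have "\<dots> \<le> card (?P \<times> {1..k})" by (rule card_image_le) (simp add: fin)
  also have "\<dots> \<le> 2 ^ card ?SC * k" using card by (simp add: card_cartesian_product)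
  finally show ?thesis .
qed

theorem lemma4p5:
  fixes V :: "'v set" and E :: "'e set" and ep :: "'e \<Rightarrow> 'v \<times> 'v"
    and safe H F :: "'e set" and p q k :: nat and s t :: "nat \<Rightarrow> 'v"
    and \<beta> :: real and x :: "'e \<Rightarrow> real"
    and VT :: "'t set" and ET :: "'t set set" and M1 :: "'t \<Rightarrow> 'v" and M2 :: "'t set \<Rightarrow> 'e list"
  assumes "finite V" and "finite E"
    and "\<forall>e\<in>E. fst (ep e) \<in> V \<and> snd (ep e) \<in> V"
    and "safe \<subseteq> E"
    and "p + q \<ge> 1"
    and "\<forall>i\<in>{1..k}. s i \<in> V \<and> t i \<in> V"
    and "H \<subseteq> E"
    and "flex_connected V ep safe H p q k s t"
    and "violating V ep safe H p q k s t F"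
    and "\<beta> \<ge> 1"
    and "\<forall>e\<in>E. x e > 0"
    and "\<forall>e\<in>H. x e = 1 / (4 * real (p + q) * \<beta>)"
    and "tree_embedding V E ep VT ET M1 M2"
    and "good_for E ep x VT ET M1 M2 F"
  shows "real (card (Z_set V ep H k s t VT ET M1 M2 F)) \<le> 2 powr (2 * real (p + q) * \<beta>) * real k"
proof -
  let ?SC = "shattered_comps V ep H VT ET M1 M2 F"
  have "real (card ?SC) * (1 / (4 * real (p + q) * \<beta>)) \<le> (\<Sum>f\<in>Minv ET M2 F. tcap E ep x VT ET M1 f)"
    using assms(11) by (intro card_shattered_comps_weighted_le[OF assms(13,1,2,7) _ assms(12)])
      (simp add: less_imp_le)
  also have "\<dots> \<le> 1 / 2" using assms(14) by (simp add: good_for_def)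
  finally have "real (card ?SC) / (4 * real (p + q) * \<beta>) \<le> 1 / 2" by simp
  moreover have "0 < 4 * real (p + q) * \<beta>" using assms(5,10) by simp
  ultimately have "real (card ?SC) \<le> 2 * real (p + q) * \<beta>"
    by (simp add: pos_divide_le_eq algebra_simps)
  have "real (card (Z_set V ep H k s t VT ET M1 M2 F)) \<le> 2 ^ card ?SC * real k"
    using card_Z_set_le[OF assms(1)] by (metis of_nat_le_iff of_nat_mult of_nat_numeral of_nat_power)
  also have "\<dots> = 2 powr real (card ?SC) * real k" by (simp add: powr_realpow)
  also have "\<dots> \<le> 2 powr (2 * real (p + q) * \<beta>) * real k"
    using \<open>real (card ?SC) \<le> 2 * real (p + q) * \<beta>\<close> by (intro mult_right_mono) auto
  finally show ?thesis .
qed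

end
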